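(* Let $\langle B,\wedge,{}'\rangle$ be an algebra with $\wedge$ binary and ${}'$ unary satisfying $x\wedge(y\wedge z)\approx y\wedge(z\wedge x)$ and $x\approx (x'\wedge y)'\wedge(x'\wedge y')'$. Then $x\wedge(y\wedge z)=(x\wedge y)\wedge z$ for all $x,y,z\in B$. *)

theory Defs
  imports Main
begin

end

theory Submission
  imports Defs
begin

(* Huntington's axiom is used only to see that every element is a meet of two elements.
   For a cyclic operation x (y z) = y (z x) with this property, splitting one factor of (a b) c
   into a product and rotating gives (a b) c = a (c b) and (a b) c = (c b) a.  Hence every
   element commutes with every product, so with everything, and then (x y) z = z (x y) = x (y z). *)

locale cyclic_magma =
  fixes mult :: "'a \<Rightarrow> 'a \<Rightarrow> 'a"  (infixl \<open>\<cdot>\<close> 70)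
  assumes cyclic: "x \<cdot> (y \<cdot> z) = y \<cdot> (z \<cdot> x)"
begin

lemma pair_mult_pair: "(a \<cdot> b) \<cdot> (c \<cdot> d) = a \<cdot> ((b \<cdot> d) \<cdot> c)"
proof -
  have "(a \<cdot> b) \<cdot> (c \<cdot> d) = c \<cdot> (d \<cdot> (a \<cdot> b))" by (rule cyclic)
  also have "d \<cdot> (a \<cdot> b) = a \<cdot> (b \<cdot> d)" by (rule cyclic)
  also have "c \<cdot> (a \<cdot> (b \<cdot> d)) = a \<cdot> ((b \<cdot> d) \<cdot> c)" by (rule cyclic)
  finally show ?thesis .
qed

end

locale surjective_cyclic_magma = cyclic_magma +
  assumes surjective: "\<exists>y z. x = y \<cdot> z"
begin

lemma left_nested_mult: "((a \<cdot> b) \<cdot> c) \<cdot> d = a \<cdot> (b \<cdot> (d \<cdot> c))"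
proof -
  obtain p q where d: "d = p \<cdot> q" using surjective by blast
  have "((a \<cdot> b) \<cdot> c) \<cdot> (p \<cdot> q) = (a \<cdot> b) \<cdot> ((c \<cdot> q) \<cdot> p)" by (rule pair_mult_pair)
  also have "\<dots> = a \<cdot> ((b \<cdot> p) \<cdot> (c \<cdot> q))" by (rule pair_mult_pair)
  also have "(b \<cdot> p) \<cdot> (c \<cdot> q) = b \<cdot> ((p \<cdot> q) \<cdot> c)" by (rule pair_mult_pair)
  finally show ?thesis by (simp only: d)
qed

lemma mult_left_exchange: "(a \<cdot> b) \<cdot> c = (c \<cdot> b) \<cdot> a"
proof -
  obtain p q where a: "a = p \<cdot> q" using surjective by blast
  have "((p \<cdot> q) \<cdot> b) \<cdot> c = p \<cdot> (q \<cdot> (c \<cdot> b))" by (rule left_nested_mult)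
  also have "\<dots> = (c \<cdot> b) \<cdot> (p \<cdot> q)" by (rule trans [OF cyclic cyclic])
  finally show ?thesis by (simp only: a)
qed

lemma mult_left_swap: "(a \<cdot> b) \<cdot> c = a \<cdot> (c \<cdot> b)"
proof -
  obtain p q where c: "c = p \<cdot> q" using surjective by blast
  have "(a \<cdot> b) \<cdot> (p \<cdot> q) = a \<cdot> ((b \<cdot> q) \<cdot> p)" by (rule pair_mult_pair)
  also have "(b \<cdot> q) \<cdot> p = (p \<cdot> q) \<cdot> b" by (rule mult_left_exchange)
  finally show ?thesis by (simp only: c)
qed

lemma commute: "x \<cdot> y = y \<cdot> x"
proof -
  obtain p q where y: "y = p \<cdot> q" using surjective by blast
  have "x \<cdot> (p \<cdot> q) = (x \<cdot> q) \<cdot> p" by (rule mult_left_swap [symmetric])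
  also have "\<dots> = (p \<cdot> q) \<cdot> x" by (rule mult_left_exchange)
  finally show ?thesis by (simp only: y)
qed

sublocale abel_semigroup mult
proof
  fix a b c
  have "a \<cdot> b \<cdot> c = c \<cdot> (a \<cdot> b)" by (rule commute)
  also have "\<dots> = a \<cdot> (b \<cdot> c)" by (rule cyclic)
  finally show "a \<cdot> b \<cdot> c = a \<cdot> (b \<cdot> c)" .
  show "a \<cdot> b = b \<cdot> a" by (rule commute)
qed

end

theorem corollary4p21:
  fixes meet :: "'a \<Rightarrow> 'a \<Rightarrow> 'a" and c :: "'a \<Rightarrow> 'a"
  assumes cyc: "\<And>x y z. meet x (meet y z) = meet y (meet z x)"
    and ax: "\<And>x y. x = meet (c (meet (c x) y)) (c (meet (c x) (c y)))"
  shows "\<forall>x y z. meet x (meet y z) = meet (meet x y) z"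
proof -
  interpret surjective_cyclic_magma meet
  proof
    show "meet x (meet y z) = meet y (meet z x)" for x y z by (rule cyc)
    show "\<exists>y z. x = meet y z" for x using ax [of x x] by blast
  qed
  show ?thesis by (simp add: assoc)
qed

end
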